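(* Let $0\le s<n$ and $A\in M_{s+1,n-s}$. There is a constant $K>0$ depending only on $A$ (and $n$) such that for every $1\le j\le n$ and every $w\in\mathcal S_{n+1,j}$ with $\|R_Ac(w)\|<1$ one has $\|w\|\le K\big(1+\|\pi_\bullet(w)\|\big)$.
   Context: $V=\mathbb R^{n+1}$ with basis $e_0,\dots,e_n$, $V_0=\mathrm{span}(e_1,\dots,e_n)$, $V_\bullet=\mathrm{span}(e_{s+1},\dots,e_n)$; $e_I=e_{i_1}\wedge\dots\wedge e_{i_j}$ for $I=\{i_1<\dots<i_j\}$; $\bigwedge(V)$ carries the inner product making $\{e_I\}$ orthonormal. $\mathcal S_{n+1,j}$ is the set of $w=v_1\wedge\dots\wedge v_j$ with $v_1,\dots,v_j\in\mathbb Z^{n+1}$ linearly independent. $\pi_\bullet$ is the orthogonal projection $\bigwedge^j(V)\to\bigwedge^j(V_\bullet)$. $c(w)_i=\sum_{J\subset\{1,\dots,n\},\#J=j-1}\langle e_i\wedge e_J,w\rangle e_J$. Index the columns of $A$ by $s+1,\dots,n$ and its rows by $0,\dots,s$; $R_A=(I_{s+1}\ A)\in M_{s+1,n+1}$, so $R_Ac(w)\in(\bigwedge^{j-1}V_0)^{s+1}$ has $i$-th component $c(w)_i+\sum_{k=s+1}^n a_{i,k}c(w)_k=\sum_J\langle(e_i+a_i)\wedge e_J,w\rangle e_J$, where $a_i=\sum_{k=s+1}^na_{i,k}e_k$; norms are Euclidean. *)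

theory Defs
  imports "HOL-Analysis.Analysis"
begin

text \<open>V = R^(n+1) with basis e_0..e_n. An element of the j-th exterior power
  is represented by its coordinate function on index sets I (the coefficient of e_I);
  coordinates with I not a j-subset of {0..n} are irrelevant/zero.
  A family of j vectors in Z^(n+1) is vs :: nat => nat => int, vs k i being the i-th
  coordinate of the k-th vector (k < j, i <= n).\<close>

definition int_lin_indep :: "nat \<Rightarrow> nat \<Rightarrow> (nat \<Rightarrow> nat \<Rightarrow> int) \<Rightarrow> bool" where
  "int_lin_indep n j vs \<longleftrightarrow>
     (\<forall>c :: nat \<Rightarrow> real. (\<forall>i\<le>n. (\<Sum>k<j. c k * real_of_int (vs k i)) = 0) \<longrightarrow> (\<forall>k<j. c k = 0))"

text \<open>Coefficient of e_I in v_1 wedge ... wedge v_j: the determinant (Leibniz formula) of the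
  j x j minor on the rows i_1 < ... < i_j of I.\<close>
definition wedge :: "nat \<Rightarrow> (nat \<Rightarrow> nat \<Rightarrow> int) \<Rightarrow> nat set \<Rightarrow> real" where
  "wedge j vs I = (if card I = j then
      (\<Sum>\<sigma> | \<sigma> permutes {..<j}. real_of_int (sign \<sigma>) *
          (\<Prod>k<j. real_of_int (vs k (sorted_list_of_set I ! \<sigma> k))))
    else 0)"

definition S_set :: "nat \<Rightarrow> nat \<Rightarrow> (nat set \<Rightarrow> real) set" where
  "S_set n j = {wedge j vs | vs. int_lin_indep n j vs}"

definition ext_norm :: "nat \<Rightarrow> nat \<Rightarrow> (nat set \<Rightarrow> real) \<Rightarrow> real" where
  "ext_norm n j w = sqrt (\<Sum>I\<in>{I. I \<subseteq> {0..n} \<and> card I = j}. (w I)\<^sup>2)"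

text \<open>Norm of the orthogonal projection pi_bullet onto the j-th exterior power of
  V_bullet = span(e_{s+1},...,e_n).\<close>
definition proj_norm :: "nat \<Rightarrow> nat \<Rightarrow> nat \<Rightarrow> (nat set \<Rightarrow> real) \<Rightarrow> real" where
  "proj_norm n s j w = sqrt (\<Sum>I\<in>{I. I \<subseteq> {s+1..n} \<and> card I = j}. (w I)\<^sup>2)"

text \<open>< e_i wedge e_J , w >\<close>
definition ctr :: "(nat set \<Rightarrow> real) \<Rightarrow> nat \<Rightarrow> nat set \<Rightarrow> real" where
  "ctr w i J = (if i \<in> J then 0 else (-1) ^ card {k\<in>J. k < i} * w (insert i J))"

text \<open>J-coefficient of the i-th component (i = 0..s) of R_A c(w):
  < e_i wedge e_J, w > + sum_{k=s+1}^n a_{i,k} < e_k wedge e_J, w >.\<close>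
definition RAc :: "nat \<Rightarrow> nat \<Rightarrow> (nat \<Rightarrow> nat \<Rightarrow> real) \<Rightarrow> (nat set \<Rightarrow> real) \<Rightarrow> nat \<Rightarrow> nat set \<Rightarrow> real" where
  "RAc n s A w i J = ctr w i J + (\<Sum>k\<in>{s+1..n}. A i k * ctr w k J)"

definition RAc_norm :: "nat \<Rightarrow> nat \<Rightarrow> nat \<Rightarrow> (nat \<Rightarrow> nat \<Rightarrow> real) \<Rightarrow> (nat set \<Rightarrow> real) \<Rightarrow> real" where
  "RAc_norm n s j A w = sqrt (\<Sum>i\<in>{0..s}. \<Sum>J\<in>{J. J \<subseteq> {1..n} \<and> card J = j - 1}. (RAc n s A w i J)\<^sup>2)"

end

theory Submission
  imports Defs
begin

text \<open>Let \<open>i = min I\<close>. The coordinate \<open>w I\<close> is the contraction \<open>\<langle>e\<^sub>i \<and> e\<^sub>J, w\<rangle>\<close> with \<open>J = I - {i}\<close>,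
  so the \<open>(i, J)\<close> entry of \<open>R\<^sub>A c(w)\<close> expresses \<open>w I\<close> through an entry of modulus at most 1 and
  the coordinates \<open>w (insert k J)\<close>, \<open>k > s\<close>, which have one index fewer in \<open>{0..s}\<close>. Iterating at
  most \<open>s + 1\<close> times bounds every coordinate by \<open>(1 + \<alpha>)\<^bsup>s+1\<^esup> (1 + \<parallel>\<pi>\<^sub>\<bullet>(w)\<parallel>)\<close>, where \<open>\<alpha>\<close>
  bounds the row sums \<open>\<Sum>\<^sub>k \<bar>a\<^sub>i\<^sub>,\<^sub>k\<bar>\<close>; summing over the at most \<open>2\<^bsup>n+1\<^esup>\<close> coordinates gives
  the claim.\<close>

lemma abs_le_L2_set:
  assumes "finite A" "x \<in> A"
  shows "\<bar>f x\<bar> \<le> L2_set f A"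
proof -
  have "L2_set (\<lambda>x. \<bar>f x\<bar>) A = L2_set f A"
    unfolding L2_set_def by simp
  with member_le_L2_set[OF assms, of "\<lambda>x. \<bar>f x\<bar>"] show ?thesis by simp
qed

lemma L2_set_le_sqrt_card_mult:
  assumes "\<And>x. x \<in> A \<Longrightarrow> \<bar>f x\<bar> \<le> M"
  shows "L2_set f A \<le> sqrt (card A) * M"
proof (cases "A = {}")
  case False
  then obtain x where "x \<in> A" by blast
  then have "0 \<le> M" using assms[of x] by linarith
  have "L2_set f A = L2_set (\<lambda>x. \<bar>f x\<bar>) A"
    unfolding L2_set_def by simp
  also have "\<dots> \<le> L2_set (\<lambda>x. M) A"
    using assms by (intro L2_set_mono) auto
  also have "\<dots> = sqrt (card A) * M"
    using \<open>0 \<le> M\<close> by (simp add: L2_set_constant)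
  finally show ?thesis .
qed simp

lemma ext_norm_eq_L2_set: "ext_norm n j w = L2_set w {I. I \<subseteq> {0..n} \<and> card I = j}"
  unfolding ext_norm_def L2_set_def ..

lemma abs_le_proj_norm:
  assumes "I \<subseteq> {s+1..n}" "card I = j"
  shows "\<bar>w I\<bar> \<le> proj_norm n s j w"
proof -
  have "proj_norm n s j w = L2_set w {I. I \<subseteq> {s+1..n} \<and> card I = j}"
    unfolding proj_norm_def L2_set_def ..
  moreover have "\<bar>w I\<bar> \<le> L2_set w {I. I \<subseteq> {s+1..n} \<and> card I = j}"
    using assms by (intro abs_le_L2_set) auto
  ultimately show ?thesis by simp
qed

lemma abs_RAc_le_RAc_norm:
  assumes "i \<le> s" "J \<subseteq> {1..n}" "card J = j - 1"
  shows "\<bar>RAc n s A w i J\<bar> \<le> RAc_norm n s j A w"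
proof -
  let ?\<J> = "{J. J \<subseteq> {1..n} \<and> card J = j - 1}"
  have "RAc_norm n s j A w = L2_set (\<lambda>(i, J). RAc n s A w i J) ({0..s} \<times> ?\<J>)"
    unfolding RAc_norm_def L2_set_def
    by (simp add: sum.cartesian_product case_prod_beta)
  moreover have "\<bar>(\<lambda>(i, J). RAc n s A w i J) (i, J)\<bar> \<le> L2_set (\<lambda>(i, J). RAc n s A w i J) ({0..s} \<times> ?\<J>)"
    using assms by (intro abs_le_L2_set) auto
  ultimately show ?thesis by simp
qed

lemma ext_norm_le_coordinate_bound:
  assumes "\<And>I. I \<subseteq> {0..n} \<Longrightarrow> card I = j \<Longrightarrow> \<bar>w I\<bar> \<le> M" "0 \<le> M"
  shows "ext_norm n j w \<le> sqrt (2 ^ (n+1)) * M"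
proof -
  let ?\<I> = "{I. I \<subseteq> {0..n} \<and> card I = j}"
  have "card ?\<I> \<le> 2 ^ (n+1)"
    using n_subsets[of "{0..n}" j] binomial_le_pow2[of "n+1" j] by simp
  then have "sqrt (card ?\<I>) \<le> sqrt (2 ^ (n+1))"
    by (metis of_nat_le_iff of_nat_numeral of_nat_power real_sqrt_le_iff)
  moreover have "ext_norm n j w \<le> sqrt (card ?\<I>) * M"
    unfolding ext_norm_eq_L2_set using assms(1) by (intro L2_set_le_sqrt_card_mult) auto
  ultimately show ?thesis
    using assms(2) by (meson mult_right_mono order_trans)
qed

lemma abs_ctr: "\<bar>ctr w k J\<bar> = (if k \<in> J then 0 else \<bar>w (insert k J)\<bar>)"
  unfolding ctr_def by (simp add: abs_mult)

lemma abs_ctr_le_abs_RAc: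
  "\<bar>ctr w i J\<bar> \<le> \<bar>RAc n s A w i J\<bar> + (\<Sum>k\<in>{s+1..n}. \<bar>A i k\<bar> * \<bar>ctr w k J\<bar>)"
proof -
  have "ctr w i J = RAc n s A w i J - (\<Sum>k\<in>{s+1..n}. A i k * ctr w k J)"
    unfolding RAc_def by simp
  also have "\<bar>\<dots>\<bar> \<le> \<bar>RAc n s A w i J\<bar> + \<bar>\<Sum>k\<in>{s+1..n}. A i k * ctr w k J\<bar>"
    by (rule abs_triangle_ineq4)
  also have "\<bar>\<Sum>k\<in>{s+1..n}. A i k * ctr w k J\<bar> \<le> (\<Sum>k\<in>{s+1..n}. \<bar>A i k\<bar> * \<bar>ctr w k J\<bar>)"
    unfolding abs_mult[symmetric] by (rule sum_abs)
  finally show ?thesis by simp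
qed

lemma ctr_Min:
  assumes "finite I" "I \<noteq> {}"
  shows "ctr w (Min I) (I - {Min I}) = w I"
proof -
  have "{k \<in> I - {Min I}. k < Min I} = {}" using assms by auto
  moreover have "insert (Min I) (I - {Min I}) = I" using Min_in[OF assms] by auto
  ultimately show ?thesis unfolding ctr_def by (simp only: card.empty) simp
qed

lemma abs_coordinate_le_by_elimination:
  fixes w :: "nat set \<Rightarrow> real"
  assumes row_sum: "\<And>i. i \<le> s \<Longrightarrow> (\<Sum>k\<in>{s+1..n}. \<bar>A i k\<bar>) \<le> \<alpha>"
    and RAc_le: "\<And>i J. i \<le> s \<Longrightarrow> J \<subseteq> {1..n} \<Longrightarrow> card J = j - 1 \<Longrightarrow> \<bar>RAc n s A w i J\<bar> \<le> 1"
    and tail_le: "\<And>I. I \<subseteq> {s+1..n} \<Longrightarrow> card I = j \<Longrightarrow> \<bar>w I\<bar> \<le> P"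
    and "0 \<le> P" "I \<subseteq> {0..n}" "card I = j"
  shows "\<bar>w I\<bar> \<le> (1 + \<alpha>) ^ card (I \<inter> {0..s}) * (1 + P)"
  using assms(5,6)
proof (induction "card (I \<inter> {0..s})" arbitrary: I)
  case 0
  then have "I \<inter> {0..s} = {}"
    by (metis card_0_eq finite_Int finite_atLeastAtMost)
  with 0 have "I \<subseteq> {s+1..n}" by (auto simp: subset_iff disjoint_iff)
  then have "\<bar>w I\<bar> \<le> P" using tail_le 0 by blast
  then show ?case by (simp flip: 0(1))
next
  case (Suc m)
  have "0 \<le> \<alpha>" using row_sum[of 0] by (meson order_trans sum_nonneg abs_ge_zero le0)
  have fin: "finite I" using Suc.prems finite_subset by blast
  define i where "i = Min I"
  define J where "J = I - {i}"
  obtain x where "x \<in> I" "x \<le> s"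
    using Suc.hyps(2) by (metis Int_iff atLeastAtMost_iff card.empty ex_in_conv nat.distinct(1))
  have "i \<in> I" and i_le: "\<And>y. y \<in> I \<Longrightarrow> i \<le> y"
    using fin \<open>x \<in> I\<close> unfolding i_def by (auto intro: Min_in)
  with \<open>x \<in> I\<close> \<open>x \<le> s\<close> have "i \<le> s" by fastforce
  have J_sub: "J \<subseteq> {1..n}"
    using Suc.prems(1) i_le unfolding J_def by force
  have card_J: "card J = j - 1"
    using Suc.prems(2) \<open>i \<in> I\<close> fin unfolding J_def by simp
  define B where "B = (1 + \<alpha>) ^ m * (1 + P)"
  have "1 \<le> B"
    unfolding B_def using mult_mono[of 1 "(1 + \<alpha>) ^ m" 1 "1 + P"] \<open>0 \<le> \<alpha>\<close> \<open>0 \<le> P\<close> by simp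
  have ctr_le: "\<bar>ctr w k J\<bar> \<le> B" if "k \<in> {s+1..n}" for k
  proof (cases "k \<in> J")
    case False
    have "insert k J \<inter> {0..s} = (I \<inter> {0..s}) - {i}"
      using that unfolding J_def by auto
    then have "m = card (insert k J \<inter> {0..s})"
      using Suc.hyps(2) \<open>i \<in> I\<close> \<open>i \<le> s\<close> fin by simp
    moreover have "insert k J \<subseteq> {0..n}"
      using that J_sub by auto
    moreover have "card (insert k J) = j"
      using False fin card_Suc_Diff1[OF fin \<open>i \<in> I\<close>] Suc.prems(2) unfolding J_def by simp
    ultimately have "\<bar>w (insert k J)\<bar> \<le> B"
      unfolding B_def using Suc.hyps(1)[of "insert k J"] by simp
    with False show ?thesis by (simp add: abs_ctr)
  qed (use \<open>1 \<le> B\<close> in \<open>simp add: abs_ctr\<close>)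
  have "\<bar>w I\<bar> = \<bar>ctr w i J\<bar>"
    using ctr_Min[OF fin, of w] \<open>i \<in> I\<close> unfolding i_def J_def by force
  also have "\<dots> \<le> \<bar>RAc n s A w i J\<bar> + (\<Sum>k\<in>{s+1..n}. \<bar>A i k\<bar> * \<bar>ctr w k J\<bar>)"
    by (rule abs_ctr_le_abs_RAc)
  also have "\<dots> \<le> 1 + (\<Sum>k\<in>{s+1..n}. \<bar>A i k\<bar>) * B"
    unfolding sum_distrib_right
    using RAc_le[OF \<open>i \<le> s\<close> J_sub card_J] ctr_le
    by (intro add_mono sum_mono mult_left_mono) auto
  also have "\<dots> \<le> B + \<alpha> * B"
    using row_sum[OF \<open>i \<le> s\<close>] \<open>1 \<le> B\<close> by (intro add_mono mult_right_mono) auto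
  also have "\<dots> = (1 + \<alpha>) ^ Suc m * (1 + P)"
    unfolding B_def by (simp add: algebra_simps)
  finally show ?case
    by (simp flip: Suc.hyps(2))
qed

theorem lemma5p1:
  fixes n s :: nat and A :: "nat \<Rightarrow> nat \<Rightarrow> real"
  assumes "s < n"
  shows "\<exists>K>0. \<forall>j w. 1 \<le> j \<and> j \<le> n \<and> w \<in> S_set n j \<and> RAc_norm n s j A w < 1
           \<longrightarrow> ext_norm n j w \<le> K * (1 + proj_norm n s j w)"
proof -
  define \<alpha> where "\<alpha> = (\<Sum>i\<in>{0..s}. \<Sum>k\<in>{s+1..n}. \<bar>A i k\<bar>)"
  have row_sum: "(\<Sum>k\<in>{s+1..n}. \<bar>A i k\<bar>) \<le> \<alpha>" if "i \<le> s" for i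
    unfolding \<alpha>_def using that
    by (intro member_le_sum[where f = "\<lambda>i. \<Sum>k\<in>{s+1..n}. \<bar>A i k\<bar>"] sum_nonneg) auto
  have "0 \<le> \<alpha>" unfolding \<alpha>_def by (intro sum_nonneg) auto
  define K where "K = sqrt (2 ^ (n+1)) * (1 + \<alpha>) ^ (s+1)"
  have "ext_norm n j w \<le> K * (1 + proj_norm n s j w)" if "RAc_norm n s j A w < 1" for j w
  proof -
    let ?P = "proj_norm n s j w"
    have "0 \<le> ?P" unfolding proj_norm_def by (simp add: sum_nonneg)
    have RAc_le: "\<bar>RAc n s A w i J\<bar> \<le> 1" if "i \<le> s" "J \<subseteq> {1..n}" "card J = j - 1" for i J
      using abs_RAc_le_RAc_norm[OF that, of A w] \<open>RAc_norm n s j A w < 1\<close> by linarith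
    have "\<bar>w I\<bar> \<le> (1 + \<alpha>) ^ (s+1) * (1 + ?P)" if "I \<subseteq> {0..n}" "card I = j" for I
    proof -
      have "\<bar>w I\<bar> \<le> (1 + \<alpha>) ^ card (I \<inter> {0..s}) * (1 + ?P)"
        using abs_coordinate_le_by_elimination[OF row_sum RAc_le abs_le_proj_norm \<open>0 \<le> ?P\<close> that] .
      also have "\<dots> \<le> (1 + \<alpha>) ^ (s+1) * (1 + ?P)"
        using card_mono[of "{0..s}" "I \<inter> {0..s}"] \<open>0 \<le> \<alpha>\<close> \<open>0 \<le> ?P\<close>
        by (intro mult_right_mono power_increasing) auto
      finally show ?thesis .
    qed
    from ext_norm_le_coordinate_bound[OF this] show ?thesis
      using \<open>0 \<le> \<alpha>\<close> \<open>0 \<le> ?P\<close> by (simp add: K_def mult.assoc)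
  qed
  moreover have "K > 0" using \<open>0 \<le> \<alpha>\<close> unfolding K_def by simp
  ultimately show ?thesis by blast
qed

end
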